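(* For every integer $n \geq 1$, let $r(n)$ be the number of three-candidate ballot sequences of length $n$ whose numbers $m_A, m_B, m_C$ of $A$'s, $B$'s and $C$'s satisfy $m_A \equiv m_B \equiv m_C \pmod 2$, and let $M(n)$ be the total number of three-candidate ballot sequences of length $n$. Then $M(n) = r(n) + r(n+1)$.
   Context: A three-candidate ballot sequence of length $n$ is a word $b_1\cdots b_n$ with $b_i\in\{A,B,C\}$ such that in every prefix $b_1\cdots b_k$ ($1\le k\le n$) the number of $A$'s is at least the number of $B$'s, which is at least the number of $C$'s. *)

theory Defs
  imports Main
begin

datatype cand = CA | CB | CC

definition cnt :: "cand \<Rightarrow> cand list \<Rightarrow> nat" where
  "cnt c w = length (filter (\<lambda>x. x = c) w)"

definition ballot_seq :: "cand list \<Rightarrow> bool" where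
  "ballot_seq w \<longleftrightarrow> (\<forall>k. 1 \<le> k \<and> k \<le> length w \<longrightarrow>
      cnt CA (take k w) \<ge> cnt CB (take k w) \<and> cnt CB (take k w) \<ge> cnt CC (take k w))"

definition ballots :: "nat \<Rightarrow> cand list set" where
  "ballots n = {w. length w = n \<and> ballot_seq w}"

definition M :: "nat \<Rightarrow> nat" where
  "M n = card (ballots n)"

definition r :: "nat \<Rightarrow> nat" where
  "r n = card {w \<in> ballots n. even (cnt CA w + cnt CB w) \<and> even (cnt CB w + cnt CC w)}"

end

theory Submission
  imports Defs
begin

text \<open>Deleting the last letter maps the parity-balanced ballot sequences of length
  \<open>n + 1\<close> bijectively onto the parity-unbalanced ones of length \<open>n\<close>. Indeed, appending a
  letter flips the parity of exactly one count, so a balanced word has an unbalanced prefix,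
  and an unbalanced word \<open>u\<close> has exactly one balancing extension: by the letter whose count
  has the odd-one-out parity. That extension is again a ballot sequence, because the count
  of this letter differs in parity from, hence is strictly less than, the count it must not
  exceed. So \<open>r (n + 1)\<close> counts the unbalanced ballot sequences of length \<open>n\<close>, and \<open>r n\<close>
  the balanced ones.\<close>

lemma card_filter_add_card_filter_not:
  assumes "finite A"
  shows "card {x \<in> A. P x} + card {x \<in> A. \<not> P x} = card A"
proof -
  have "A = {x \<in> A. P x} \<union> {x \<in> A. \<not> P x}" by blast
  then show ?thesis
    using assms by (metis (no_types, lifting) card_Un_disjoint disjoint_iff finite_Un mem_Collect_eq)
qed

lemma cnt_Nil [simp]: "cnt c [] = 0"
  by (simp add: cnt_def)

lemma cnt_snoc [simp]: "cnt c (w @ [d]) = cnt c w + (if d = c then 1 else 0)"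
  by (simp add: cnt_def)

definition tally_ordered :: "cand list \<Rightarrow> bool" where
  "tally_ordered w \<longleftrightarrow> cnt CB w \<le> cnt CA w \<and> cnt CC w \<le> cnt CB w"

lemma ballot_seq_iff_prefixes:
  "ballot_seq w \<longleftrightarrow> (\<forall>k\<in>{1..length w}. tally_ordered (take k w))"
  by (auto simp: ballot_seq_def tally_ordered_def)

lemma ballot_seq_Nil [simp]: "ballot_seq []"
  by (simp add: ballot_seq_iff_prefixes)

lemma ballot_seq_snoc:
  "ballot_seq (w @ [c]) \<longleftrightarrow> ballot_seq w \<and> tally_ordered (w @ [c])"
  unfolding ballot_seq_iff_prefixes by (auto simp: atLeastAtMostSuc_conv)

lemma ballot_seq_imp_tally_ordered: "ballot_seq w \<Longrightarrow> tally_ordered w"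
  by (cases w rule: rev_exhaust) (auto simp: ballot_seq_snoc tally_ordered_def)

lemma ballots_Suc:
  "ballots (Suc n) = {u @ [c] | u c. u \<in> ballots n \<and> tally_ordered (u @ [c])}"
proof (intro set_eqI iffI)
  fix w assume "w \<in> ballots (Suc n)"
  then have len: "length w = Suc n" and ballot: "ballot_seq w"
    by (simp_all add: ballots_def)
  from len obtain u c where w: "w = u @ [c]"
    by (metis length_Suc_conv_rev)
  from ballot len have "u \<in> ballots n" "tally_ordered (u @ [c])"
    by (simp_all add: w ballots_def ballot_seq_snoc)
  with w show "w \<in> {u @ [c] | u c. u \<in> ballots n \<and> tally_ordered (u @ [c])}"
    by blast
qed (auto simp: ballots_def ballot_seq_snoc)

lemma finite_ballots: "finite (ballots n)"
proof (rule finite_subset)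
  show "ballots n \<subseteq> {w. set w \<subseteq> {CA, CB, CC} \<and> length w = n}"
    using cand.exhaust by (auto simp: ballots_def)
  show "finite {w. set w \<subseteq> {CA, CB, CC} \<and> length w = n}"
    by (rule finite_lists_length_eq) simp
qed

definition parity_balanced :: "cand list \<Rightarrow> bool" where
  "parity_balanced w \<longleftrightarrow> even (cnt CA w + cnt CB w) \<and> even (cnt CB w + cnt CC w)"

definition parity_fix :: "cand list \<Rightarrow> cand" where
  "parity_fix w = (if even (cnt CB w + cnt CC w) then CA
                   else if even (cnt CA w + cnt CC w) then CB else CC)"

lemma parity_balanced_snoc:
  "parity_balanced (w @ [c]) \<longleftrightarrow> \<not> parity_balanced w \<and> c = parity_fix w"
  by (cases c) (auto simp: parity_balanced_def parity_fix_def)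

lemma tally_ordered_snoc_parity_fix:
  assumes "tally_ordered w" and "\<not> parity_balanced w"
  shows "tally_ordered (w @ [parity_fix w])"
proof (cases "parity_fix w")
  case CA
  with assms(1) show ?thesis by (simp add: tally_ordered_def)
next
  case CB
  with assms(2) have "cnt CA w \<noteq> cnt CB w"
    by (auto simp: parity_balanced_def parity_fix_def split: if_splits)
  with CB assms(1) show ?thesis by (simp add: tally_ordered_def)
next
  case CC
  then have "cnt CB w \<noteq> cnt CC w"
    by (auto simp: parity_fix_def split: if_splits)
  with CC assms(1) show ?thesis by (simp add: tally_ordered_def)
qed

lemma balanced_ballots_Suc:
  "{w \<in> ballots (Suc n). parity_balanced w} =
     (\<lambda>u. u @ [parity_fix u]) ` {u \<in> ballots n. \<not> parity_balanced u}"
proof -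
  have "{w \<in> ballots (Suc n). parity_balanced w} =
      {u @ [c] | u c. u \<in> ballots n \<and> tally_ordered (u @ [c]) \<and>
         \<not> parity_balanced u \<and> c = parity_fix u}"
    by (auto simp: ballots_Suc parity_balanced_snoc)
  also have "\<dots> = {u @ [parity_fix u] | u. u \<in> ballots n \<and> \<not> parity_balanced u}"
    by (auto simp: ballots_def intro: tally_ordered_snoc_parity_fix ballot_seq_imp_tally_ordered)
  finally show ?thesis by blast
qed

lemma card_balanced_ballots_Suc:
  "card {w \<in> ballots (Suc n). parity_balanced w} = card {u \<in> ballots n. \<not> parity_balanced u}"
  unfolding balanced_ballots_Suc by (rule card_image) (simp add: inj_on_def)

lemma M_eq_r_add_r_Suc: "M n = r n + r (Suc n)"
proof -
  have r_eq: "r m = card {w \<in> ballots m. parity_balanced w}" for m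
    by (simp add: r_def parity_balanced_def)
  show ?thesis
    unfolding M_def r_eq card_balanced_ballots_Suc
    by (rule card_filter_add_card_filter_not[OF finite_ballots, symmetric])
qed

text \<open>The identity holds for \<open>n = 0\<close> as well.\<close>

theorem mainTheorem5:
  fixes n :: nat
  assumes "n \<ge> 1"
  shows "M n = r n + r (n + 1)"
  using M_eq_r_add_r_Suc by simp

end
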